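(* For positive integers $j,k,m,n$ (with all complete graphs and paths below of order at least $2$ and all cycles of length at least $3$), the following hold: 1. $C_{cc}(K_m\boxtimes K_n)=C_{cc}(K_m\circ K_n)=1$. 2. $C_{cc}(K_m\boxtimes C_n)=C_{cc}(K_m\circ C_n)=\lfloor n/2\rfloor$. 3. $C_{cc}(K_m\boxtimes P_n)=C_{cc}(K_m\circ P_n)=\lceil n/2\rceil$. 4. $C_{cc}(C_m\circ C_n)=\lfloor m/2\rfloor\lfloor n/2\rfloor$. 5. $C_{cc}(C_{2j}\boxtimes C_n)=j\lfloor n/2\rfloor$. 6. $C_{cc}(C_{2j+1}\boxtimes C_{2k+1})=jk+\lfloor k/2\rfloor$, when $j\geq k$. 7. $C_{cc}(C_m\boxtimes P_n)=C_{cc}(C_m\circ P_n)=\lfloor m/2\rfloor\lceil n/2\rceil$. 8. $C_{cc}(P_m\boxtimes P_n)=C_{cc}(P_m\circ P_n)=\lceil m/2\rceil\lceil n/2\rceil$.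
   Context: All graphs are finite, simple and undirected. $K_\ell$, $C_\ell$, $P_\ell$ denote the complete graph, cycle and path on $\ell$ vertices. For a graph $G$ and $S\subseteq V(G)$, the cycle interval $\langle S\rangle$ consists of the vertices of $S$ together with every vertex $w\in V(G)\setminus S$ such that $G[S\cup\{w\}]$ contains a cycle through $w$; $S$ is cycle convex if $\langle S\rangle=S$. The cycle convexity number $C_{cc}(G)$ is the maximum cardinality of a proper (i.e. $\neq V(G)$) cycle convex subset of $V(G)$. The strong product $G\boxtimes H$ has vertex set $V(G)\times V(H)$ with $(g_1,h_1)\sim(g_2,h_2)$ iff ($g_1\sim g_2$, $h_1=h_2$) or ($g_1=g_2$, $h_1\sim h_2$) or ($g_1\sim g_2$, $h_1\sim h_2$). The lexicographic product $G\circ H$ has vertex set $V(G)\times V(H)$ with $(g_1,h_1)\sim(g_2,h_2)$ iff $g_1\sim g_2$, or ($g_1=g_2$ and $h_1\sim h_2$). *)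

theory Defs
  imports Main
begin

text \<open>A finite simple graph is represented by a vertex set together with a
symmetric, irreflexive adjacency relation (only meaningful on the vertex set).\<close>

type_synonym 'a graph = "'a set \<times> ('a \<Rightarrow> 'a \<Rightarrow> bool)"

definition verts :: "'a graph \<Rightarrow> 'a set" where
  "verts G = fst G"

definition adj :: "'a graph \<Rightarrow> 'a \<Rightarrow> 'a \<Rightarrow> bool" where
  "adj G = snd G"

definition has_cycle_through :: "'a graph \<Rightarrow> 'a set \<Rightarrow> 'a \<Rightarrow> bool" where
  "has_cycle_through G T w \<longleftrightarrow>
     (\<exists>vs. 3 \<le> length vs \<and> distinct vs \<and> set vs \<subseteq> T \<and> w \<in> set vs \<and>
        (\<forall>i < length vs. adj G (vs ! i) (vs ! ((i + 1) mod length vs))))"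

definition cycle_interval :: "'a graph \<Rightarrow> 'a set \<Rightarrow> 'a set" where
  "cycle_interval G S =
     S \<union> {w \<in> verts G - S. has_cycle_through G (S \<union> {w}) w}"

definition cycle_convex :: "'a graph \<Rightarrow> 'a set \<Rightarrow> bool" where
  "cycle_convex G S \<longleftrightarrow> S \<subseteq> verts G \<and> cycle_interval G S = S"

definition Ccc :: "'a graph \<Rightarrow> nat" where
  "Ccc G = Max {card S | S. S \<subseteq> verts G \<and> S \<noteq> verts G \<and> cycle_convex G S}"

definition Kg :: "nat \<Rightarrow> nat graph" where
  "Kg n = ({0..<n}, \<lambda>a b. a < n \<and> b < n \<and> a \<noteq> b)"

definition Cg :: "nat \<Rightarrow> nat graph" where
  "Cg n = ({0..<n}, \<lambda>a b. a < n \<and> b < n \<and> a \<noteq> b \<and>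
                          (b = (a + 1) mod n \<or> a = (b + 1) mod n))"

definition Pg :: "nat \<Rightarrow> nat graph" where
  "Pg n = ({0..<n}, \<lambda>a b. a < n \<and> b < n \<and> (b = a + 1 \<or> a = b + 1))"

definition strong_prod :: "'a graph \<Rightarrow> 'b graph \<Rightarrow> ('a \<times> 'b) graph" where
  "strong_prod G H = (verts G \<times> verts H,
     \<lambda>(g1, h1) (g2, h2).
        (adj G g1 g2 \<and> h1 = h2) \<or> (g1 = g2 \<and> adj H h1 h2) \<or> (adj G g1 g2 \<and> adj H h1 h2))"

definition lexic_prod :: "'a graph \<Rightarrow> 'b graph \<Rightarrow> ('a \<times> 'b) graph" where
  "lexic_prod G H = (verts G \<times> verts H,
     \<lambda>(g1, h1) (g2, h2). adj G g1 g2 \<or> (g1 = g2 \<and> adj H h1 h2))"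

end

theory Submission
  imports Defs
begin

(* In a strong or lexicographic product of two connected graphs without isolated vertices every
   edge lies on a triangle whose third vertex can be chosen conveniently. Hence a cycle-convex
   set containing an edge contains a vertical edge (g,h),(g,h'); moving along the edges of the
   first factor it then contains (x,h) and (x,h') for every x, and moving along the edges of the
   second factor it contains every vertex. So the proper cycle-convex sets are exactly the
   independent sets, and C_cc is the independence number alpha of the product.

   For lexicographic products alpha is multiplicative; for strong products it is multiplicative
   as soon as one factor can be covered by alpha cliques, which holds for K_m, P_n and C_2j.
   In C_(2j+1) x C_(2k+1) two consecutive rows of an independent set form an independent set of
   C_(2k+1), whence 2 alpha <= (2j+1) k. A matching independent set is first built for j = k and
   then pulled back along a homomorphism C_(2j+1) -> C_(2k+1). *)

section \<open>Independent sets and cycle convexity\<close>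

definition independent :: "'a graph \<Rightarrow> 'a set \<Rightarrow> bool" where
  "independent G I \<longleftrightarrow> I \<subseteq> verts G \<and> (\<forall>a\<in>I. \<forall>b\<in>I. \<not> adj G a b)"

definition independence_number :: "'a graph \<Rightarrow> nat" where
  "independence_number G = Max {card I | I. independent G I}"

lemma finite_independent_cards:
  assumes "finite (verts G)"
  shows "finite {card I | I. independent G I}"
proof (rule finite_subset)
  show "{card I | I. independent G I} \<subseteq> card ` Pow (verts G)"
    unfolding independent_def by auto
qed (use assms in simp)

lemma card_le_independence_number:
  assumes "finite (verts G)" "independent G I"
  shows "card I \<le> independence_number G"
  unfolding independence_number_def
  using finite_independent_cards[OF assms(1)] assms(2) by (auto intro: Max_ge)

lemma maximum_independent_exists:
  assumes "finite (verts G)"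
  obtains I where "independent G I" "card I = independence_number G"
proof -
  have "independent G {}"
    unfolding independent_def by simp
  then have "independence_number G \<in> {card I | I. independent G I}"
    unfolding independence_number_def using finite_independent_cards[OF assms] by (intro Max_in) auto
  then obtain I where "independent G I" "card I = independence_number G"
    by auto
  then show ?thesis
    by (rule that)
qed

lemma independence_number_eqI:
  assumes "finite (verts G)" "\<And>J. independent G J \<Longrightarrow> card J \<le> c"
    and "independent G I" "card I = c"
  shows "independence_number G = c"
proof (rule antisym)
  obtain J where "independent G J" "card J = independence_number G"
    using assms(1) by (rule maximum_independent_exists)
  then show "independence_number G \<le> c"
    using assms(2) by metis
  show "c \<le> independence_number G"
    using card_le_independence_number[OF assms(1,3)] assms(4) by simp
qed

lemma cycle_convex_triangle:
  assumes "cycle_convex G S" "w \<in> verts G" "u \<in> S" "v \<in> S" "u \<noteq> v"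
    and "adj G w u" "adj G u v" "adj G v w"
  shows "w \<in> S"
proof (rule ccontr)
  assume "w \<notin> S"
  have "adj G ([w, u, v] ! i) ([w, u, v] ! ((i + 1) mod 3))" if "i < 3" for i
  proof -
    have "i = 0 \<or> i = 1 \<or> i = 2"
      using that by auto
    then show ?thesis
      using assms(6-8) by auto
  qed
  then have "has_cycle_through G (S \<union> {w}) w"
    unfolding has_cycle_through_def
    using assms(3-5) \<open>w \<notin> S\<close> by (intro exI[of _ "[w, u, v]"]) auto
  then show False
    using assms(1,2) \<open>w \<notin> S\<close> unfolding cycle_convex_def cycle_interval_def by blast
qed

lemma independent_imp_cycle_convex:
  assumes "independent G I"
  shows "cycle_convex G I"
proof -
  have "\<not> has_cycle_through G (I \<union> {w}) w" if "w \<notin> I" for w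
  proof
    assume "has_cycle_through G (I \<union> {w}) w"
    then obtain vs where "3 \<le> length vs" "distinct vs" "set vs \<subseteq> I \<union> {w}" "w \<in> set vs"
      and path: "\<forall>i < length vs. adj G (vs ! i) (vs ! ((i + 1) mod length vs))"
      unfolding has_cycle_through_def by blast
    define n where "n = length vs"
    obtain p where p: "p < n" "vs ! p = w"
      using \<open>w \<in> set vs\<close> unfolding n_def by (auto simp: in_set_conv_nth)
    \<comment> \<open>the two successors of \<open>w\<close> on the cycle are adjacent vertices of \<open>I\<close>\<close>
    have after_w: "vs ! ((p + d) mod n) \<in> I" if "0 < d" "d < n" for d
    proof -
      have "(p + d) mod n \<noteq> p"
        using that p(1) by (cases "p + d < n") (auto simp: mod_if)
      moreover have "(p + d) mod n < n"
        using p by simp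
      ultimately
      have "vs ! ((p + d) mod n) \<noteq> w" "vs ! ((p + d) mod n) \<in> set vs"
        using \<open>distinct vs\<close> p unfolding n_def by (auto simp: nth_eq_iff_index_eq)
      then show ?thesis
        using \<open>set vs \<subseteq> I \<union> {w}\<close> by blast
    qed
    have "((p + 1) mod n + 1) mod n = (p + 2) mod n"
      by (simp add: mod_Suc_eq)
    then have "adj G (vs ! ((p + 1) mod n)) (vs ! ((p + 2) mod n))"
      using path p by (metis n_def mod_less_divisor order.strict_trans1 zero_le)
    then show False
      using assms after_w[of 1] after_w[of 2] \<open>3 \<le> length vs\<close>
      unfolding independent_def n_def by auto
  qed
  then show ?thesis
    using assms unfolding cycle_convex_def cycle_interval_def independent_def by auto
qed

lemma Ccc_eq_independence_number:
  assumes "adj G a b" "a \<in> verts G" "b \<in> verts G"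
    and "\<And>S. cycle_convex G S \<Longrightarrow> S \<noteq> verts G \<Longrightarrow> independent G S"
  shows "Ccc G = independence_number G"
proof -
  have "independent G S \<longleftrightarrow> S \<subseteq> verts G \<and> S \<noteq> verts G \<and> cycle_convex G S" for S
  proof
    assume "independent G S"
    moreover have "S \<noteq> verts G"
      using \<open>independent G S\<close> assms(1-3) unfolding independent_def by blast
    ultimately show "S \<subseteq> verts G \<and> S \<noteq> verts G \<and> cycle_convex G S"
      using independent_imp_cycle_convex unfolding independent_def by blast
  qed (use assms(4) in blast)
  then show ?thesis
    unfolding Ccc_def independence_number_def by simp
qed

section \<open>Connected graphs and their products\<close>

definition simple_graph :: "'a graph \<Rightarrow> bool" where
  "simple_graph G \<longleftrightarrow>
     (\<forall>a\<in>verts G. \<forall>b\<in>verts G. adj G a b \<longrightarrow> a \<noteq> b \<and> adj G b a)"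

definition graph_connected :: "'a graph \<Rightarrow> bool" where
  "graph_connected G \<longleftrightarrow>
     (\<forall>S \<subseteq> verts G. S \<noteq> {} \<longrightarrow> (\<forall>a\<in>S. \<forall>b\<in>verts G. adj G a b \<longrightarrow> b \<in> S) \<longrightarrow> S = verts G)"

definition nontrivial_connected :: "'a graph \<Rightarrow> bool" where
  "nontrivial_connected G \<longleftrightarrow> simple_graph G \<and> graph_connected G \<and> verts G \<noteq> {} \<and>
     (\<forall>a\<in>verts G. \<exists>b\<in>verts G. adj G a b)"

lemma graph_connected_induct [consumes 3, case_names base step]:
  assumes "graph_connected G" "x0 \<in> verts G" "x \<in> verts G"
    and "P x0"
    and "\<And>a b. a \<in> verts G \<Longrightarrow> b \<in> verts G \<Longrightarrow> adj G a b \<Longrightarrow> P a \<Longrightarrow> P b"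
  shows "P x"
proof -
  have "{x \<in> verts G. P x} = verts G"
    using assms(1) unfolding graph_connected_def
    by (elim allE[of _ "{x \<in> verts G. P x}"] impE) (use assms(2,4,5) in auto)
  then show ?thesis
    using assms(3) by blast
qed

lemma nontrivial_connected_adjD:
  assumes "nontrivial_connected G" "a \<in> verts G" "b \<in> verts G" "adj G a b"
  shows "a \<noteq> b" "adj G b a"
  using assms unfolding nontrivial_connected_def simple_graph_def by blast+

lemma verts_strong_prod [simp]: "verts (strong_prod G H) = verts G \<times> verts H"
  by (simp add: strong_prod_def verts_def)

lemma adj_strong_prod [simp]:
  "adj (strong_prod G H) (g1, h1) (g2, h2) \<longleftrightarrow>
     (adj G g1 g2 \<and> h1 = h2) \<or> (g1 = g2 \<and> adj H h1 h2) \<or> (adj G g1 g2 \<and> adj H h1 h2)"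
  by (simp add: strong_prod_def adj_def)

lemma verts_lexic_prod [simp]: "verts (lexic_prod G H) = verts G \<times> verts H"
  by (simp add: lexic_prod_def verts_def)

lemma adj_lexic_prod [simp]:
  "adj (lexic_prod G H) (g1, h1) (g2, h2) \<longleftrightarrow> adj G g1 g2 \<or> (g1 = g2 \<and> adj H h1 h2)"
  by (simp add: lexic_prod_def adj_def)

lemma adj_lexic_prod_if_adj_strong_prod:
  "adj (strong_prod G H) p q \<Longrightarrow> adj (lexic_prod G H) p q"
  by (cases p; cases q) auto

context
  fixes G :: "'a graph" and H :: "'b graph" and \<Gamma> :: "('a \<times> 'b) graph" and S :: "('a \<times> 'b) set"
  assumes G: "nontrivial_connected G" and H: "nontrivial_connected H"
    and verts_\<Gamma>: "verts \<Gamma> = verts G \<times> verts H"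
    and strong_edges: "\<And>p q. adj (strong_prod G H) p q \<Longrightarrow> adj \<Gamma> p q"
    and S: "cycle_convex \<Gamma> S"
begin

lemma cycle_convex_prod_triangle:
  assumes "w \<in> verts G \<times> verts H" "u \<in> S" "v \<in> S" "u \<noteq> v"
    and "adj (strong_prod G H) w u" "adj (strong_prod G H) u v" "adj (strong_prod G H) v w"
  shows "w \<in> S"
  using cycle_convex_triangle[OF S] assms verts_\<Gamma> strong_edges by metis

lemma cycle_convex_prod_spread_vertical_edge:
  assumes edge: "(g, h) \<in> S" "(g, h') \<in> S" "adj H h h'" and "x \<in> verts G"
  shows "(x, h) \<in> S \<and> (x, h') \<in> S"
proof -
  have SV: "S \<subseteq> verts G \<times> verts H"
    using S verts_\<Gamma> unfolding cycle_convex_def by simp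
  note G_adj = nontrivial_connected_adjD[OF G]
  have "graph_connected G"
    using G unfolding nontrivial_connected_def by simp
  have "g \<in> verts G" "h \<in> verts H" "h' \<in> verts H"
    using edge SV by auto
  then have "h \<noteq> h'" "adj H h' h"
    using nontrivial_connected_adjD[OF H] edge(3) by blast+
  show ?thesis
    using \<open>graph_connected G\<close> \<open>g \<in> verts G\<close> \<open>x \<in> verts G\<close>
  proof (induction x rule: graph_connected_induct)
    case base
    show ?case using edge by simp
  next
    case (step a b)
    have "(b, h) \<in> S"
      by (rule cycle_convex_prod_triangle[of _ "(a, h)" "(a, h')"])
        (use step G_adj(2)[OF step(1-3)] \<open>h \<in> verts H\<close> \<open>h' \<in> verts H\<close> \<open>h \<noteq> h'\<close>
            \<open>adj H h' h\<close> edge(3) in auto)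
    moreover have "(b, h') \<in> S"
      by (rule cycle_convex_prod_triangle[of _ "(a, h')" "(a, h)"])
        (use step G_adj(2)[OF step(1-3)] \<open>h \<in> verts H\<close> \<open>h' \<in> verts H\<close> \<open>h \<noteq> h'\<close>
            \<open>adj H h' h\<close> edge(3) in auto)
    ultimately show ?case ..
  qed
qed

lemma cycle_convex_prod_spread_horizontal_edge:
  assumes edge: "(x, y) \<in> S" "(x', y) \<in> S" "adj G x x'" and "z \<in> verts H"
  shows "(x, z) \<in> S \<and> (x', z) \<in> S"
proof -
  have SV: "S \<subseteq> verts G \<times> verts H"
    using S verts_\<Gamma> unfolding cycle_convex_def by simp
  note H_adj = nontrivial_connected_adjD[OF H]
  have "graph_connected H"
    using H unfolding nontrivial_connected_def by simp
  have "x \<in> verts G" "x' \<in> verts G" "y \<in> verts H"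
    using edge SV by auto
  then have "x \<noteq> x'" "adj G x' x"
    using nontrivial_connected_adjD[OF G] edge(3) by blast+
  show ?thesis
    using \<open>graph_connected H\<close> \<open>y \<in> verts H\<close> \<open>z \<in> verts H\<close>
  proof (induction z rule: graph_connected_induct)
    case base
    show ?case using edge by simp
  next
    case (step a b)
    have "(x, b) \<in> S"
      by (rule cycle_convex_prod_triangle[of _ "(x, a)" "(x', a)"])
        (use step H_adj(2)[OF step(1-3)] \<open>x \<in> verts G\<close> \<open>x' \<in> verts G\<close> \<open>x \<noteq> x'\<close>
            \<open>adj G x' x\<close> edge(3) in auto)
    moreover have "(x', b) \<in> S"
      by (rule cycle_convex_prod_triangle[of _ "(x', a)" "(x, a)"])
        (use step H_adj(2)[OF step(1-3)] \<open>x \<in> verts G\<close> \<open>x' \<in> verts G\<close> \<open>x \<noteq> x'\<close>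
            \<open>adj G x' x\<close> edge(3) in auto)
    ultimately show ?case ..
  qed
qed

lemma cycle_convex_prod_vertical_edge_eq_verts:
  assumes edge: "(g, h) \<in> S" "(g, h') \<in> S" "adj H h h'"
  shows "S = verts \<Gamma>"
proof -
  have "(x, y) \<in> S" if "x \<in> verts G" "y \<in> verts H" for x y
  proof -
    obtain x' where "x' \<in> verts G" "adj G x x'"
      using G \<open>x \<in> verts G\<close> unfolding nontrivial_connected_def by blast
    then have "(x, h) \<in> S" "(x', h) \<in> S"
      using cycle_convex_prod_spread_vertical_edge[OF edge] \<open>x \<in> verts G\<close> by blast+
    then show ?thesis
      using cycle_convex_prod_spread_horizontal_edge \<open>adj G x x'\<close> \<open>y \<in> verts H\<close> by blast
  qed
  then show ?thesis
    using S verts_\<Gamma> unfolding cycle_convex_def by auto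
qed

end

lemma strong_prod_cycle_convex_vertical_edge:
  assumes G: "nontrivial_connected G" and H: "nontrivial_connected H"
    and S: "cycle_convex (strong_prod G H) S"
    and edge: "p \<in> S" "q \<in> S" "adj (strong_prod G H) p q"
  obtains g h h' where "(g, h) \<in> S" "(g, h') \<in> S" "adj H h h'"
proof -
  note G_adj = nontrivial_connected_adjD[OF G] and H_adj = nontrivial_connected_adjD[OF H]
  obtain g1 h1 g2 h2 where pq: "p = (g1, h1)" "q = (g2, h2)"
    by (cases p, cases q)
  have in_verts: "g1 \<in> verts G" "g2 \<in> verts G" "h1 \<in> verts H" "h2 \<in> verts H"
    using S edge(1,2) unfolding pq cycle_convex_def by auto
  note triangle = cycle_convex_triangle[OF S _ edge(1,2)]
  consider "g1 = g2" "adj H h1 h2" | "adj G g1 g2" "h1 = h2" | "adj G g1 g2" "adj H h1 h2"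
    using edge(3) G_adj(1)[OF in_verts(1,1)] unfolding pq by auto
  then show ?thesis
  proof cases
    case 1
    then show ?thesis
      using edge that unfolding pq by blast
  next
    case 2
    obtain h' where "h' \<in> verts H" "adj H h1 h'"
      using H in_verts unfolding nontrivial_connected_def by blast
    have "(g1, h') \<in> S"
    proof (rule triangle)
      show "adj (strong_prod G H) (g1, h') p"
        using H_adj(2)[OF in_verts(3) \<open>h' \<in> verts H\<close> \<open>adj H h1 h'\<close>] unfolding pq by simp
      show "adj (strong_prod G H) q (g1, h')"
        using G_adj(2)[OF in_verts(1,2) \<open>adj G g1 g2\<close>] \<open>adj H h1 h'\<close> 2 unfolding pq by simp
    qed (use edge G_adj(1)[OF in_verts(1,2) \<open>adj G g1 g2\<close>] \<open>h' \<in> verts H\<close> in_verts pq in auto)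
    then show ?thesis
      using that edge(1) \<open>adj H h1 h'\<close> unfolding pq by blast
  next
    case 3
    have "(g1, h2) \<in> S"
    proof (rule triangle)
      show "adj (strong_prod G H) (g1, h2) p"
        using H_adj(2)[OF in_verts(3,4) \<open>adj H h1 h2\<close>] unfolding pq by simp
      show "adj (strong_prod G H) q (g1, h2)"
        using G_adj(2)[OF in_verts(1,2) \<open>adj G g1 g2\<close>] unfolding pq by simp
    qed (use edge G_adj(1)[OF in_verts(1,2) \<open>adj G g1 g2\<close>] in_verts pq in auto)
    then show ?thesis
      using that edge(1) \<open>adj H h1 h2\<close> unfolding pq by blast
  qed
qed

lemma lexic_prod_cycle_convex_vertical_edge:
  assumes G: "nontrivial_connected G" and H: "nontrivial_connected H"
    and S: "cycle_convex (lexic_prod G H) S"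
    and edge: "p \<in> S" "q \<in> S" "adj (lexic_prod G H) p q"
  obtains g h h' where "(g, h) \<in> S" "(g, h') \<in> S" "adj H h h'"
proof -
  note G_adj = nontrivial_connected_adjD[OF G] and H_adj = nontrivial_connected_adjD[OF H]
  obtain g1 h1 g2 h2 where pq: "p = (g1, h1)" "q = (g2, h2)"
    by (cases p, cases q)
  have in_verts: "g1 \<in> verts G" "g2 \<in> verts G" "h1 \<in> verts H" "h2 \<in> verts H"
    using S edge(1,2) unfolding pq cycle_convex_def by auto
  consider "g1 = g2" "adj H h1 h2" | "adj G g1 g2"
    using edge(3) unfolding pq by auto
  then show ?thesis
  proof cases
    case 1
    then show ?thesis
      using edge that unfolding pq by blast
  next
    case 2
    obtain h' where "h' \<in> verts H" "adj H h1 h'"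
      using H in_verts unfolding nontrivial_connected_def by blast
    have "(g1, h') \<in> S"
    proof (rule cycle_convex_triangle[OF S _ edge(1,2)])
      show "adj (lexic_prod G H) (g1, h') p"
        using H_adj(2)[OF in_verts(3) \<open>h' \<in> verts H\<close> \<open>adj H h1 h'\<close>] unfolding pq by simp
      show "adj (lexic_prod G H) q (g1, h')"
        using G_adj(2)[OF in_verts(1,2) \<open>adj G g1 g2\<close>] unfolding pq by simp
    qed (use edge G_adj(1)[OF in_verts(1,2) \<open>adj G g1 g2\<close>] \<open>h' \<in> verts H\<close> in_verts pq in auto)
    then show ?thesis
      using that edge(1) \<open>adj H h1 h'\<close> unfolding pq by blast
  qed
qed

lemma Ccc_strong_prod_eq_independence_number:
  assumes G: "nontrivial_connected G" and H: "nontrivial_connected H"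
  shows "Ccc (strong_prod G H) = independence_number (strong_prod G H)"
proof -
  obtain g h h' where "g \<in> verts G" "h \<in> verts H" "h' \<in> verts H" "adj H h h'"
    using G H unfolding nontrivial_connected_def by blast
  moreover have "independent (strong_prod G H) S"
    if S: "cycle_convex (strong_prod G H) S" "S \<noteq> verts (strong_prod G H)" for S
  proof -
    have "\<not> adj (strong_prod G H) p q" if "p \<in> S" "q \<in> S" for p q
      using strong_prod_cycle_convex_vertical_edge[OF G H S(1) that]
        cycle_convex_prod_vertical_edge_eq_verts[OF G H verts_strong_prod _ S(1)] S(2) by metis
    then show ?thesis
      using S(1) unfolding independent_def cycle_convex_def by blast
  qed
  ultimately show ?thesis
    by (intro Ccc_eq_independence_number[of _ "(g, h)" "(g, h')"]) auto
qed

lemma Ccc_lexic_prod_eq_independence_number: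
  assumes G: "nontrivial_connected G" and H: "nontrivial_connected H"
  shows "Ccc (lexic_prod G H) = independence_number (lexic_prod G H)"
proof -
  obtain g h h' where "g \<in> verts G" "h \<in> verts H" "h' \<in> verts H" "adj H h h'"
    using G H unfolding nontrivial_connected_def by blast
  moreover have "independent (lexic_prod G H) S"
    if S: "cycle_convex (lexic_prod G H) S" "S \<noteq> verts (lexic_prod G H)" for S
  proof -
    have "\<not> adj (lexic_prod G H) p q" if "p \<in> S" "q \<in> S" for p q
      using lexic_prod_cycle_convex_vertical_edge[OF G H S(1) that]
        cycle_convex_prod_vertical_edge_eq_verts[OF G H verts_lexic_prod
          adj_lexic_prod_if_adj_strong_prod S(1)] S(2) by metis
    then show ?thesis
      using S(1) unfolding independent_def cycle_convex_def by blast
  qed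
  ultimately show ?thesis
    by (intro Ccc_eq_independence_number[of _ "(g, h)" "(g, h')"]) auto
qed

section \<open>Independence numbers of products\<close>

lemma independent_lexic_prod_times:
  assumes "independent G A" "independent H B"
  shows "independent (lexic_prod G H) (A \<times> B)"
  using assms unfolding independent_def by auto

lemma independent_strong_prod_times:
  assumes "independent G A" "independent H B"
  shows "independent (strong_prod G H) (A \<times> B)"
  using assms unfolding independent_def by auto

lemma card_independent_lexic_prod_le:
  assumes fin: "finite (verts G)" "finite (verts H)"
    and I: "independent (lexic_prod G H) I"
  shows "card I \<le> independence_number G * independence_number H"
proof -
  define F where "F g = {h. (g, h) \<in> I}" for g
  have IV: "I \<subseteq> verts G \<times> verts H"
    using I unfolding independent_def by simp
  have no_edge: "\<not> adj (lexic_prod G H) p q" if "p \<in> I" "q \<in> I" for p q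
    using I that unfolding independent_def by blast
  have fibers: "independent H (F g)" for g
    unfolding independent_def F_def using IV no_edge by auto
  have "independent G (fst ` I)"
    unfolding independent_def using IV no_edge by fastforce
  have "I = (SIGMA g:fst ` I. F g)"
    unfolding F_def by force
  then have "card I = (\<Sum>g\<in>fst ` I. card (F g))"
    using IV fin fibers unfolding independent_def
    by (metis card_SigmaI finite_imageI finite_subset finite_cartesian_product)
  also have "\<dots> \<le> (\<Sum>g\<in>fst ` I. independence_number H)"
    by (intro sum_mono card_le_independence_number[OF fin(2) fibers])
  also have "\<dots> \<le> independence_number G * independence_number H"
    using card_le_independence_number[OF fin(1) \<open>independent G (fst ` I)\<close>] by simp
  finally show ?thesis .
qed

lemma independence_number_lexic_prod:
  assumes fin: "finite (verts G)" "finite (verts H)"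
  shows "independence_number (lexic_prod G H) = independence_number G * independence_number H"
proof -
  obtain A where A: "independent G A" "card A = independence_number G"
    using fin(1) by (rule maximum_independent_exists)
  obtain B where B: "independent H B" "card B = independence_number H"
    using fin(2) by (rule maximum_independent_exists)
  show ?thesis
  proof (rule independence_number_eqI)
    show "finite (verts (lexic_prod G H))"
      using fin by simp
    show "card J \<le> independence_number G * independence_number H"
      if "independent (lexic_prod G H) J" for J
      using fin that by (rule card_independent_lexic_prod_le)
    show "independent (lexic_prod G H) (A \<times> B)"
      using A(1) B(1) by (rule independent_lexic_prod_times)
    show "card (A \<times> B) = independence_number G * independence_number H"
      using A(2) B(2) by (simp add: card_cartesian_product)
  qed
qed

definition has_clique_cover :: "'a graph \<Rightarrow> nat \<Rightarrow> bool" where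
  "has_clique_cover G c \<longleftrightarrow> (\<exists>q. (\<forall>x\<in>verts G. q x < c) \<and>
     (\<forall>x\<in>verts G. \<forall>y\<in>verts G. q x = q y \<and> x \<noteq> y \<longrightarrow> adj G x y))"

lemma independent_strong_prod_over_clique:
  assumes I: "independent (strong_prod G H) I" and "C \<subseteq> I"
    and clique: "\<And>g h g' h'. (g, h) \<in> C \<Longrightarrow> (g', h') \<in> C \<Longrightarrow> g = g' \<or> adj G g g'"
  shows "inj_on snd C" "independent H (snd ` C)"
proof -
  have no_edge: "\<not> adj (strong_prod G H) p p'" if "p \<in> C" "p' \<in> C" for p p'
    using I that \<open>C \<subseteq> I\<close> unfolding independent_def by blast
  have apart: "h \<noteq> h' \<and> \<not> adj H h h'"
    if "(g, h) \<in> C" "(g', h') \<in> C" "(g, h) \<noteq> (g', h')" for g h g' h'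
    using clique[OF that(1,2)] no_edge[OF that(1,2)] that(3) by auto
  then show "inj_on snd C"
    by (intro inj_onI) (metis prod.collapse)
  show "independent H (snd ` C)"
    unfolding independent_def
  proof (intro conjI ballI)
    show "snd ` C \<subseteq> verts H"
      using I \<open>C \<subseteq> I\<close> unfolding independent_def by auto
    show "\<not> adj H h h'" if hh': "h \<in> snd ` C" "h' \<in> snd ` C" for h h'
    proof -
      obtain g g' where "(g, h) \<in> C" "(g', h') \<in> C"
        using hh' by force
      then show ?thesis
        using apart no_edge[of "(g, h)" "(g, h)"] by (cases "(g, h) = (g', h')") auto
    qed
  qed
qed

lemma card_independent_strong_prod_le:
  assumes fin: "finite (verts G)" "finite (verts H)"
    and cover: "has_clique_cover G c"
    and I: "independent (strong_prod G H) I"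
  shows "card I \<le> c * independence_number H"
proof -
  obtain q where q: "\<forall>x\<in>verts G. q x < c"
    and clique: "\<forall>x\<in>verts G. \<forall>y\<in>verts G. q x = q y \<and> x \<noteq> y \<longrightarrow> adj G x y"
    using cover unfolding has_clique_cover_def by blast
  define C where "C i = {p \<in> I. q (fst p) = i}" for i
  have IV: "I \<subseteq> verts G \<times> verts H"
    using I unfolding independent_def by simp
  have "card (C i) \<le> independence_number H" for i
  proof -
    have "C i \<subseteq> I"
      unfolding C_def by auto
    moreover have "g = g' \<or> adj G g g'" if "(g, h) \<in> C i" "(g', h') \<in> C i" for g h g' h'
    proof -
      have "g \<in> verts G" "g' \<in> verts G" "q g = q g'"
        using that IV unfolding C_def by auto
      then show ?thesis
        using clique by blast
    qed
    ultimately have "inj_on snd (C i)" "independent H (snd ` C i)"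
      using independent_strong_prod_over_clique[OF I, of "C i"] by blast+
    then show ?thesis
      using card_le_independence_number[OF fin(2)] by (metis card_image)
  qed
  have "I = (\<Union>i<c. C i)"
    using IV q unfolding C_def by auto
  then have "card I \<le> (\<Sum>i<c. card (C i))"
    by (metis card_UN_le finite_lessThan)
  also have "\<dots> \<le> c * independence_number H"
    using sum_mono[of "{..<c}" "\<lambda>i. card (C i)" "\<lambda>_. independence_number H"]
      \<open>\<And>i. card (C i) \<le> independence_number H\<close> by simp
  finally show ?thesis .
qed

lemma independence_number_strong_prod:
  assumes fin: "finite (verts G)" "finite (verts H)"
    and cover: "has_clique_cover G (independence_number G)"
  shows "independence_number (strong_prod G H) = independence_number G * independence_number H"
proof -
  obtain A where A: "independent G A" "card A = independence_number G"
    using fin(1) by (rule maximum_independent_exists)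
  obtain B where B: "independent H B" "card B = independence_number H"
    using fin(2) by (rule maximum_independent_exists)
  show ?thesis
  proof (rule independence_number_eqI)
    show "finite (verts (strong_prod G H))"
      using fin by simp
    show "card J \<le> independence_number G * independence_number H"
      if "independent (strong_prod G H) J" for J
      using fin cover that by (rule card_independent_strong_prod_le)
    show "independent (strong_prod G H) (A \<times> B)"
      using A(1) B(1) by (rule independent_strong_prod_times)
    show "card (A \<times> B) = independence_number G * independence_number H"
      using A(2) B(2) by (simp add: card_cartesian_product)
  qed
qed

lemma independence_number_strong_prod_le_swap:
  assumes "finite (verts G)" "finite (verts H)"
  shows "independence_number (strong_prod G H) \<le> independence_number (strong_prod H G)"
proof -
  have "finite (verts (strong_prod G H))" "finite (verts (strong_prod H G))"
    using assms by simp_all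
  obtain I where I: "independent (strong_prod G H) I" "card I = independence_number (strong_prod G H)"
    using \<open>finite (verts (strong_prod G H))\<close> by (rule maximum_independent_exists)
  have "independent (strong_prod H G) (prod.swap ` I)"
    unfolding independent_def
  proof (intro conjI ballI)
    show "prod.swap ` I \<subseteq> verts (strong_prod H G)"
      using I(1) unfolding independent_def by auto
    fix a b assume "a \<in> prod.swap ` I" "b \<in> prod.swap ` I"
    then obtain p q where "p \<in> I" "q \<in> I" "a = prod.swap p" "b = prod.swap q"
      by blast
    moreover have "\<not> adj (strong_prod G H) p q"
      using I(1) \<open>p \<in> I\<close> \<open>q \<in> I\<close> unfolding independent_def by blast
    ultimately show "\<not> adj (strong_prod H G) a b"
      by (cases p; cases q) auto
  qed
  then have "card (prod.swap ` I) \<le> independence_number (strong_prod H G)"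
    using \<open>finite (verts (strong_prod H G))\<close> by (rule card_le_independence_number[rotated])
  then show ?thesis
    using I(2) by (simp add: card_image)
qed

lemma independence_number_strong_prod_commute:
  assumes "finite (verts G)" "finite (verts H)"
  shows "independence_number (strong_prod G H) = independence_number (strong_prod H G)"
  using assms by (intro antisym independence_number_strong_prod_le_swap)

lemma card_independent_strong_prod_adjacent_rows:
  assumes fin: "finite (verts H)" and I: "independent (strong_prod G H) I"
    and "adj G x x'" "adj G x' x"
  shows "card {y. (x, y) \<in> I} + card {y. (x', y) \<in> I} \<le> independence_number H"
proof -
  define R where "R x = {y. (x, y) \<in> I}" for x
  have R_verts: "R z \<subseteq> verts H" for z
    using I unfolding independent_def R_def by auto
  have no_edge: "\<not> adj (strong_prod G H) p p'" if "p \<in> I" "p' \<in> I" for p p'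
    using I that unfolding independent_def by blast
  have disjoint: "R x \<inter> R x' = {}"
    using no_edge \<open>adj G x x'\<close> unfolding R_def by fastforce
  have "independent H (R x \<union> R x')"
    unfolding independent_def
  proof (intro conjI ballI)
    show "R x \<union> R x' \<subseteq> verts H"
      using R_verts by auto
    show "\<not> adj H y y'" if "y \<in> R x \<union> R x'" "y' \<in> R x \<union> R x'" for y y'
      using that no_edge \<open>adj G x x'\<close> \<open>adj G x' x\<close> unfolding R_def by auto
  qed
  moreover have "finite (R z)" for z
    using R_verts fin by (rule finite_subset)
  ultimately show ?thesis
    using card_le_independence_number[OF fin] disjoint unfolding R_def[symmetric]
    by (metis card_Un_disjoint)
qed

lemma independent_strong_prod_pullback:
  assumes hom: "\<And>x x'. x \<in> verts G \<Longrightarrow> x' \<in> verts G \<Longrightarrow> adj G x x' \<Longrightarrow> adj G' (f x) (f x')"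
    and I: "independent (strong_prod G' H) I"
  shows "independent (strong_prod G H) (SIGMA x:verts G. {y. (f x, y) \<in> I})"
  unfolding independent_def
proof (intro conjI ballI)
  show "(SIGMA x:verts G. {y. (f x, y) \<in> I}) \<subseteq> verts (strong_prod G H)"
    using I unfolding independent_def by auto
  fix u v assume "u \<in> (SIGMA x:verts G. {y. (f x, y) \<in> I})" "v \<in> (SIGMA x:verts G. {y. (f x, y) \<in> I})"
  then obtain x y x' y' where "u = (x, y)" "v = (x', y')" "x \<in> verts G" "x' \<in> verts G"
    "(f x, y) \<in> I" "(f x', y') \<in> I"
    by blast
  moreover have "\<not> adj (strong_prod G' H) (f x, y) (f x', y')"
    using I \<open>(f x, y) \<in> I\<close> \<open>(f x', y') \<in> I\<close> unfolding independent_def by blast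
  ultimately show "\<not> adj (strong_prod G H) u v"
    using hom[of x x'] by auto
qed

lemma Ccc_lexic_prod:
  assumes "nontrivial_connected G" "nontrivial_connected H" "finite (verts G)" "finite (verts H)"
  shows "Ccc (lexic_prod G H) = independence_number G * independence_number H"
  using assms Ccc_lexic_prod_eq_independence_number independence_number_lexic_prod by metis

lemma Ccc_strong_prod_clique_cover:
  assumes "nontrivial_connected G" "nontrivial_connected H" "finite (verts G)" "finite (verts H)"
    and "has_clique_cover G (independence_number G)"
  shows "Ccc (strong_prod G H) = independence_number G * independence_number H"
  using assms Ccc_strong_prod_eq_independence_number independence_number_strong_prod by metis

section \<open>Complete graphs, cycles and paths\<close>

lemma verts_Kg [simp]: "verts (Kg n) = {0..<n}"
  by (simp add: Kg_def verts_def)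

lemma adj_Kg [simp]: "adj (Kg n) a b \<longleftrightarrow> a < n \<and> b < n \<and> a \<noteq> b"
  by (simp add: Kg_def adj_def)

lemma verts_Cg [simp]: "verts (Cg n) = {0..<n}"
  by (simp add: Cg_def verts_def)

lemma adj_Cg [simp]:
  "adj (Cg n) a b \<longleftrightarrow> a < n \<and> b < n \<and> a \<noteq> b \<and> (b = (a + 1) mod n \<or> a = (b + 1) mod n)"
  by (simp add: Cg_def adj_def)

lemma adj_Cg_sym: "adj (Cg n) a b \<longleftrightarrow> adj (Cg n) b a"
  by auto

lemma verts_Pg [simp]: "verts (Pg n) = {0..<n}"
  by (simp add: Pg_def verts_def)

lemma adj_Pg [simp]: "adj (Pg n) a b \<longleftrightarrow> a < n \<and> b < n \<and> (b = a + 1 \<or> a = b + 1)"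
  by (simp add: Pg_def adj_def)

definition cycle_succ :: "nat \<Rightarrow> nat \<Rightarrow> nat" where
  "cycle_succ n x = (if Suc x = n then 0 else Suc x)"

lemma adj_Cg_cycle_succ:
  assumes "2 \<le> n" "x < n"
  shows "adj (Cg n) x (cycle_succ n x)"
  using assms unfolding cycle_succ_def by (auto simp: mod_Suc)

lemma sum_cycle_succ:
  fixes g :: "nat \<Rightarrow> 'a::comm_monoid_add"
  shows "(\<Sum>x<n. g (cycle_succ n x)) = (\<Sum>x<n. g x)"
proof (cases n)
  case (Suc m)
  have "(\<Sum>x<Suc m. g (cycle_succ (Suc m) x)) = (\<Sum>x<m. g (Suc x)) + g 0"
    unfolding cycle_succ_def by simp
  also have "\<dots> = (\<Sum>x<Suc m. g x)"
    by (subst sum.lessThan_Suc_shift) (simp add: add.commute)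
  finally show ?thesis
    unfolding Suc .
qed simp

lemma graph_connected_consecutive:
  assumes V: "verts G = {0..<n}"
    and E: "\<And>a. Suc a < n \<Longrightarrow> adj G a (Suc a) \<and> adj G (Suc a) a"
  shows "graph_connected G"
  unfolding graph_connected_def
proof (intro allI impI)
  fix S assume "S \<subseteq> verts G" "S \<noteq> {}"
    and closed: "\<forall>a\<in>S. \<forall>b\<in>verts G. adj G a b \<longrightarrow> b \<in> S"
  then obtain x0 where "x0 \<in> S"
    by blast
  then have "x0 < n"
    using \<open>S \<subseteq> verts G\<close> V by auto
  have "x0 - d \<in> S" for d
  proof (induction d)
    case (Suc d)
    show ?case
    proof (cases "d < x0")
      case True
      then have "Suc (x0 - Suc d) = x0 - d"
        by simp
      then show ?thesis
        using closed Suc E[of "x0 - Suc d"] V \<open>x0 < n\<close> by (metis atLeastLessThan_iff le0 less_imp_diff_less)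
    next
      case False
      then show ?thesis using Suc by simp
    qed
  qed (use \<open>x0 \<in> S\<close> in simp)
  then have "0 \<in> S"
    by (metis diff_self_eq_0)
  have "i < n \<longrightarrow> i \<in> S" for i
  proof (induction i)
    case (Suc i)
    then show ?case
      using closed E[of i] V by auto
  qed (use \<open>0 \<in> S\<close> in simp)
  then show "S = verts G"
    using \<open>S \<subseteq> verts G\<close> V by auto
qed

lemma nontrivial_connected_Kg:
  assumes "2 \<le> n"
  shows "nontrivial_connected (Kg n)"
  unfolding nontrivial_connected_def simple_graph_def
proof (intro conjI)
  show "graph_connected (Kg n)"
    by (rule graph_connected_consecutive) auto
  show "\<forall>a\<in>verts (Kg n). \<exists>b\<in>verts (Kg n). adj (Kg n) a b"
  proof
    fix a assume "a \<in> verts (Kg n)"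
    then show "\<exists>b\<in>verts (Kg n). adj (Kg n) a b"
      using assms by (intro bexI[of _ "if a = 0 then 1 else 0"]) auto
  qed
qed (use assms in auto)

lemma nontrivial_connected_Cg:
  assumes "3 \<le> n"
  shows "nontrivial_connected (Cg n)"
  unfolding nontrivial_connected_def simple_graph_def
proof (intro conjI)
  show "graph_connected (Cg n)"
    by (rule graph_connected_consecutive) auto
  show "\<forall>a\<in>verts (Cg n). \<exists>b\<in>verts (Cg n). adj (Cg n) a b"
  proof
    fix a assume "a \<in> verts (Cg n)"
    moreover have "(a + 1) mod n \<noteq> a"
      using assms \<open>a \<in> verts (Cg n)\<close> by (cases "a + 1 < n") (auto simp: mod_if)
    ultimately show "\<exists>b\<in>verts (Cg n). adj (Cg n) a b"
      using assms by (intro bexI[of _ "(a + 1) mod n"]) auto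
  qed
qed (use assms in auto)

lemma nontrivial_connected_Pg:
  assumes "2 \<le> n"
  shows "nontrivial_connected (Pg n)"
  unfolding nontrivial_connected_def simple_graph_def
proof (intro conjI)
  show "graph_connected (Pg n)"
    by (rule graph_connected_consecutive) auto
  show "\<forall>a\<in>verts (Pg n). \<exists>b\<in>verts (Pg n). adj (Pg n) a b"
  proof
    fix a assume "a \<in> verts (Pg n)"
    then show "\<exists>b\<in>verts (Pg n). adj (Pg n) a b"
      using assms by (intro bexI[of _ "if Suc a < n then Suc a else a - 1"]) auto
  qed
qed (use assms in auto)

lemma double_card_le_if_disjoint_image:
  assumes "inj_on f I" "f ` I \<inter> I = {}" "f ` I \<union> I \<subseteq> A" "finite A"
  shows "2 * card I \<le> card A"
proof -
  have "finite I"
    using assms(3,4) finite_subset by blast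
  then have "card (f ` I \<union> I) = card I + card I"
    using assms(1,2) by (simp add: card_Un_disjoint card_image)
  then show ?thesis
    using card_mono[OF assms(4,3)] by simp
qed

lemma independence_number_Kg:
  assumes "1 \<le> n"
  shows "independence_number (Kg n) = 1"
proof (rule independence_number_eqI)
  show "card J \<le> 1" if "independent (Kg n) J" for J
  proof -
    have "J \<subseteq> {0..<n}" "\<forall>a\<in>J. \<forall>b\<in>J. a = b"
      using that unfolding independent_def by (auto simp: subset_iff)
    then show ?thesis
      using card_le_Suc0_iff_eq[of J] finite_subset[of J "{0..<n}"] by simp
  qed
  show "independent (Kg n) {0}"
    using assms unfolding independent_def by simp
qed simp_all

lemma independence_number_Cg:
  assumes "3 \<le> n"
  shows "independence_number (Cg n) = n div 2"
proof (rule independence_number_eqI)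
  show "card J \<le> n div 2" if J: "independent (Cg n) J" for J
  proof -
    have JV: "J \<subseteq> {0..<n}"
      using J unfolding independent_def by simp
    have "cycle_succ n x \<notin> J" if "x \<in> J" for x
    proof -
      have "adj (Cg n) x (cycle_succ n x)"
        using that JV assms by (intro adj_Cg_cycle_succ) auto
      then show ?thesis
        using J that unfolding independent_def by blast
    qed
    moreover have "inj_on (cycle_succ n) J" "cycle_succ n ` J \<union> J \<subseteq> {0..<n}"
      using JV unfolding cycle_succ_def inj_on_def by auto
    ultimately have "2 * card J \<le> n"
      using double_card_le_if_disjoint_image[of "cycle_succ n" J "{0..<n}"] by auto
    then show ?thesis
      by simp
  qed
  have "\<not> adj (Cg n) (2 * i) (2 * i')" if "i < n div 2" "i' < n div 2" for i i'
    using that by (auto simp: mod_Suc) presburger+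
  then show "independent (Cg n) ((\<lambda>i. 2 * i) ` {..<n div 2})"
    unfolding independent_def by auto
qed (simp_all add: card_image inj_on_def)

lemma independence_number_Pg: "independence_number (Pg n) = (n + 1) div 2"
proof (rule independence_number_eqI)
  show "card J \<le> (n + 1) div 2" if "independent (Pg n) J" for J
  proof -
    have JV: "J \<subseteq> {0..<n}"
      using that unfolding independent_def by simp
    have "Suc ` J \<inter> J = {}"
      using that JV unfolding independent_def by fastforce
    moreover have "Suc ` J \<union> J \<subseteq> {0..<n + 1}"
      using JV by auto
    ultimately have "2 * card J \<le> n + 1"
      using double_card_le_if_disjoint_image[of Suc J "{0..<n + 1}"] by simp
    then show ?thesis
      by simp
  qed
  show "independent (Pg n) ((\<lambda>i. 2 * i) ` {..<(n + 1) div 2})"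
    unfolding independent_def by auto presburger+
qed (simp_all add: card_image inj_on_def)

lemma has_clique_cover_Kg:
  assumes "1 \<le> n"
  shows "has_clique_cover (Kg n) (independence_number (Kg n))"
  unfolding has_clique_cover_def independence_number_Kg[OF assms]
  by (intro exI[of _ "\<lambda>_. 0"]) auto

lemma has_clique_cover_Cg_even:
  assumes "3 \<le> 2 * j"
  shows "has_clique_cover (Cg (2 * j)) (independence_number (Cg (2 * j)))"
proof -
  have "adj (Cg (2 * j)) x y" if "x < 2 * j" "y < 2 * j" "x div 2 = y div 2" "x \<noteq> y" for x y
  proof -
    have "y = x + 1 \<or> x = y + 1"
      using that(3,4) by presburger
    then show ?thesis
      using that by auto
  qed
  moreover have "independence_number (Cg (2 * j)) = j"
    using independence_number_Cg[OF assms] by simp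
  ultimately show ?thesis
    unfolding has_clique_cover_def by (intro exI[of _ "\<lambda>i. i div 2"]) auto
qed

lemma has_clique_cover_Pg: "has_clique_cover (Pg n) (independence_number (Pg n))"
  unfolding has_clique_cover_def independence_number_Pg
  by (intro exI[of _ "\<lambda>i. i div 2"]) (auto; presburger)

section \<open>Strong products of odd cycles\<close>

lemma card_independent_strong_prod_Cg_le:
  assumes a: "3 \<le> a" and fin: "finite (verts H)"
    and I: "independent (strong_prod (Cg a) H) I"
  shows "2 * card I \<le> a * independence_number H"
proof -
  define R where "R x = {y. (x, y) \<in> I}" for x
  have IV: "I \<subseteq> {..<a} \<times> verts H"
    using I unfolding independent_def by auto
  have "card I = card (SIGMA x:{..<a}. R x)"
    using IV unfolding R_def by (intro arg_cong[of _ _ card]) auto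
  also have "\<dots> = (\<Sum>x<a. card (R x))"
    using IV fin unfolding R_def by (subst card_SigmaI) (auto intro: finite_subset)
  finally have "2 * card I = (\<Sum>x<a. card (R x)) + (\<Sum>x<a. card (R (cycle_succ a x)))"
    using sum_cycle_succ[of "\<lambda>x. card (R x)" a] by simp
  also have "\<dots> \<le> (\<Sum>x<a. independence_number H)"
    unfolding sum.distrib[symmetric] R_def
    using adj_Cg_cycle_succ[of a] adj_Cg_sym a
    by (intro sum_mono card_independent_strong_prod_adjacent_rows[OF fin I]) auto
  finally show ?thesis
    by simp
qed

lemma Cg_doubled_residues_not_adj:
  fixes k q q' :: nat and d :: int
  defines "b \<equiv> 2 * k + 1"
  assumes dvd: "int b dvd int q' - int q - d" and d: "0 < \<bar>d\<bar>" "\<bar>d\<bar> < int k"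
  shows "2 * q mod b \<noteq> 2 * q' mod b \<and> \<not> adj (Cg b) (2 * q mod b) (2 * q' mod b)"
proof -
  have no_dvd: "\<not> int b dvd 2 * int q' - 2 * int q - e" if "\<bar>e\<bar> \<le> 1" for e :: int
  proof
    assume "int b dvd 2 * int q' - 2 * int q - e"
    moreover have "2 * int q' - 2 * int q - e = (2 * d - e) + 2 * (int q' - int q - d)"
      by simp
    ultimately have "int b dvd 2 * d - e"
      using dvd by (metis dvd_add_left_iff dvd_mult)
    moreover have "\<bar>2 * d - e\<bar> < int b"
      using d that unfolding b_def by linarith
    ultimately have "2 * d = e"
      using dvd_imp_le_int[of "2 * d - e" "int b"] by fastforce
    then show False
      using d that by linarith
  qed
  have mod_eq: "int b dvd int m - int n" if "m mod b = n mod b" for m n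
    using that by (simp add: mod_eq_iff_dvd_symdiff_nat)
  have "2 * q mod b \<noteq> 2 * q' mod b"
    using no_dvd[of 0] mod_eq[of "2 * q'" "2 * q"] by auto
  moreover have "2 * q' mod b \<noteq> (2 * q mod b + 1) mod b"
    using no_dvd[of 1] mod_eq[of "2 * q'" "2 * q + 1"] by (auto simp: mod_Suc_eq algebra_simps)
  moreover have "2 * q mod b \<noteq> (2 * q' mod b + 1) mod b"
    using no_dvd[of "-1"] mod_eq[of "2 * q' + 1" "2 * q"] by (auto simp: mod_Suc_eq algebra_simps)
  ultimately show ?thesis
    by simp
qed

(* Substituting y = 2q mod (2k+1), the vertices y, y' of C_(2k+1) are adjacent iff
   q - q' = +-k (mod 2k+1), since 2 (k+1) = 1. Row p of the independent set of C_(2k+1) x C_(2k+1)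
   receives the q's of a strip of width about k/2; two strips in the same or in consecutive rows
   only contain q's whose difference is, modulo 2k+1, nonzero and of absolute value below k. *)
definition strip :: "nat \<Rightarrow> nat \<Rightarrow> nat set" where
  "strip k p = {p * k div 2 ..< Suc p * k div 2}"

lemma strip_wrap_around_close:
  assumes "q \<in> strip k (2 * k)" "q' \<in> strip k 0"
  shows "\<exists>d. 0 < \<bar>d\<bar> \<and> \<bar>d\<bar> < int k \<and> int (2 * k + 1) dvd int q' - int q - d"
proof -
  define s where "s = k div 2"
  define e where "e = int q' - int q + 2 * int (s * k) + int s"
  have "q' < s" "k * k \<le> q" "q < k * k + s"
    using assms unfolding strip_def s_def by (auto simp: algebra_simps)
  then have bounds: "int q' < int s" "int (k * k) \<le> int q" "int q < int (k * k) + int s"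
    by linarith+
  have "k = 2 * s \<or> k = 2 * s + 1"
    unfolding s_def by presburger
  then have "int (k * k) = 2 * int (s * k) \<and> k = 2 * s \<or>
      int (k * k) = 2 * int (s * k) + int k \<and> k = 2 * s + 1"
    by (auto simp: algebra_simps)
  then have "0 < \<bar>e\<bar> \<and> \<bar>e\<bar> < int k"
    using bounds unfolding e_def by linarith
  moreover have "int q' - int q - e = - int s * int (2 * k + 1)"
    unfolding e_def by (simp add: algebra_simps)
  ultimately show ?thesis
    by (intro exI[of _ e]) auto
qed

lemma strip_pairs_close:
  assumes p: "p < 2 * k + 1" and q: "q \<in> strip k p" "q' \<in> strip k p'"
    and rows: "(p' = p \<and> q \<noteq> q') \<or> p' = Suc p mod (2 * k + 1)"
  shows "\<exists>d. 0 < \<bar>d\<bar> \<and> \<bar>d\<bar> < int k \<and> int (2 * k + 1) dvd int q' - int q - d"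
proof -
  have shift: "(p * k + 2 * k) div 2 = p * k div 2 + k"
    by simp
  have "Suc p mod (2 * k + 1) = (if p = 2 * k then 0 else Suc p)"
    using p by (simp add: mod_Suc)
  then consider "p' = p" "q \<noteq> q'" | "p' = Suc p" | "p = 2 * k" "p' = 0"
    using rows p by (auto split: if_splits)
  then show ?thesis
  proof cases
    case 1
    have "Suc p * k div 2 \<le> p * k div 2 + k"
      using shift div_le_mono[of "Suc p * k" "p * k + 2 * k" 2] by simp
    then have "\<bar>int q' - int q\<bar> < int k"
      using q 1 unfolding strip_def by auto
    then show ?thesis
      using 1 by (intro exI[of _ "int q' - int q"]) auto
  next
    case 2
    have "Suc (Suc p) * k div 2 = p * k div 2 + k"
      using shift by (simp add: algebra_simps)
    then have "0 < int q' - int q" "int q' - int q < int k"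
      using q 2 unfolding strip_def by auto
    then show ?thesis
      by (intro exI[of _ "int q' - int q"]) auto
  next
    case 3
    then show ?thesis
      using strip_wrap_around_close q by simp
  qed
qed

definition strip_set :: "nat \<Rightarrow> (nat \<times> nat) set" where
  "strip_set k = (SIGMA p:{..<2 * k + 1}. (\<lambda>q. 2 * q mod (2 * k + 1)) ` strip k p)"

lemma independent_strip_set: "independent (strong_prod (Cg (2 * k + 1)) (Cg (2 * k + 1))) (strip_set k)"
  unfolding independent_def
proof (intro conjI ballI)
  show "strip_set k \<subseteq> verts (strong_prod (Cg (2 * k + 1)) (Cg (2 * k + 1)))"
    unfolding strip_set_def by auto
  have far: "2 * q mod (2 * k + 1) \<noteq> 2 * q' mod (2 * k + 1) \<and>
      \<not> adj (Cg (2 * k + 1)) (2 * q mod (2 * k + 1)) (2 * q' mod (2 * k + 1))"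
    if "p < 2 * k + 1" "q \<in> strip k p" "q' \<in> strip k p'"
      "(p' = p \<and> q \<noteq> q') \<or> p' = Suc p mod (2 * k + 1)" for p p' q q'
    using strip_pairs_close[OF that] Cg_doubled_residues_not_adj by blast
  fix u v assume "u \<in> strip_set k" "v \<in> strip_set k"
  then obtain p q p' q' where u: "u = (p, 2 * q mod (2 * k + 1))" "p < 2 * k + 1" "q \<in> strip k p"
    and v: "v = (p', 2 * q' mod (2 * k + 1))" "p' < 2 * k + 1" "q' \<in> strip k p'"
    unfolding strip_set_def by blast
  have Cg_step: "c = Suc a mod n \<or> a = Suc c mod n" if "adj (Cg n) a c" for n a c
    using that by auto
  have Cg_irrefl: "\<not> adj (Cg n) a a" for n a
    by simp
  show "\<not> adj (strong_prod (Cg (2 * k + 1)) (Cg (2 * k + 1))) u v"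
  proof
    assume "adj (strong_prod (Cg (2 * k + 1)) (Cg (2 * k + 1))) u v"
    then have "adj (Cg (2 * k + 1)) p p' \<and> 2 * q mod (2 * k + 1) = 2 * q' mod (2 * k + 1) \<or>
        p = p' \<and> adj (Cg (2 * k + 1)) (2 * q mod (2 * k + 1)) (2 * q' mod (2 * k + 1)) \<or>
        adj (Cg (2 * k + 1)) p p' \<and> adj (Cg (2 * k + 1)) (2 * q mod (2 * k + 1)) (2 * q' mod (2 * k + 1))"
      unfolding u v by (simp only: adj_strong_prod)
    then show False
      using far[OF u(2,3) v(3)] far[OF v(2,3) u(3)] Cg_step[of "2 * k + 1" p p'] adj_Cg_sym Cg_irrefl
      by metis
  qed
qed

(* A homomorphism from C_(2d+a) onto C_a: the first 2d vertices alternate between 0 and 1,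
   the remaining a vertices go once around C_a. *)
definition cycle_fold :: "nat \<Rightarrow> nat \<Rightarrow> nat" where
  "cycle_fold d x = (if x < 2 * d then x mod 2 else x - 2 * d)"

lemma adj_Cg_cycle_fold_Suc:
  assumes "2 \<le> a" "x < 2 * d + a"
  shows "adj (Cg a) (cycle_fold d x) (cycle_fold d (Suc x mod (2 * d + a)))"
proof -
  consider "Suc x < 2 * d" | "Suc x = 2 * d" | "2 * d \<le> x" "Suc x < 2 * d + a" | "Suc x = 2 * d + a"
    using assms(2) by linarith
  then show ?thesis
  proof cases
    case 1
    have "adj (Cg a) 0 1" "adj (Cg a) 1 0"
      using assms(1) by auto
    moreover have "x mod 2 = 0 \<and> Suc x mod 2 = 1 \<or> x mod 2 = 1 \<and> Suc x mod 2 = 0"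
      by presburger
    ultimately show ?thesis
      using 1 unfolding cycle_fold_def by auto
  next
    case 2
    then have "x mod 2 = 1"
      by presburger
    then show ?thesis
      using 2 assms(1) unfolding cycle_fold_def by auto
  next
    case 3
    then show ?thesis
      using assms(1) unfolding cycle_fold_def by (auto simp: Suc_diff_le)
  next
    case 4
    then have "x - 2 * d = a - 1" "Suc x mod (2 * d + a) = 0"
      by simp_all
    then show ?thesis
      using assms(1) unfolding cycle_fold_def by auto
  qed
qed

lemma adj_Cg_cycle_fold:
  assumes "2 \<le> a" "adj (Cg (2 * d + a)) x x'"
  shows "adj (Cg a) (cycle_fold d x) (cycle_fold d x')"
proof -
  have "x' = Suc x mod (2 * d + a) \<or> x = Suc x' mod (2 * d + a)" "x < 2 * d + a" "x' < 2 * d + a"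
    using assms(2) by auto
  then show ?thesis
    using adj_Cg_cycle_fold_Suc[OF assms(1)] adj_Cg_sym by metis
qed

lemma cycle_fold_less:
  assumes "2 \<le> a" "x < 2 * d + a"
  shows "cycle_fold d x < a"
  using assms unfolding cycle_fold_def by auto

lemma sum_cycle_fold:
  "(\<Sum>x<2 * d + a. g (cycle_fold d x)) = d * (g 0 + g 1) + (\<Sum>x<a. g x)"
proof (induction d)
  case 0
  then show ?case
    by (simp add: cycle_fold_def)
next
  case (Suc d)
  have "cycle_fold (Suc d) (Suc (Suc x)) = cycle_fold d x" for x
    unfolding cycle_fold_def by auto
  moreover have "cycle_fold (Suc d) 0 = 0" "cycle_fold (Suc d) 1 = 1"
    unfolding cycle_fold_def by auto
  moreover have "2 * Suc d + a = Suc (Suc (2 * d + a))"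
    by simp
  ultimately show ?case
    using Suc by (simp only: sum.lessThan_Suc_shift) simp
qed

lemma sum_card_strip: "(\<Sum>p<n. card (strip k p)) = n * k div 2"
proof (induction n)
  case (Suc n)
  have "n * k div 2 \<le> Suc n * k div 2"
    by (intro div_le_mono) simp
  then show ?case
    using Suc by (simp add: strip_def)
qed simp

lemma card_strip_set_fiber:
  assumes "p < 2 * k + 1"
  shows "card {y. (p, y) \<in> strip_set k} = card (strip k p)"
proof -
  have "{y. (p, y) \<in> strip_set k} = (\<lambda>q. 2 * q mod (2 * k + 1)) ` strip k p"
    using assms unfolding strip_set_def by auto
  moreover have "inj_on (\<lambda>q. 2 * q mod (2 * k + 1)) (strip k p)"
  proof (rule inj_onI, rule ccontr)
    fix q q' assume q: "q \<in> strip k p" "q' \<in> strip k p" "q \<noteq> q'"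
      and "2 * q mod (2 * k + 1) = 2 * q' mod (2 * k + 1)"
    moreover obtain d where "0 < \<bar>d\<bar>" "\<bar>d\<bar> < int k" "int (2 * k + 1) dvd int q' - int q - d"
      using strip_pairs_close[OF assms q(1,2)] q(3) by blast
    ultimately show False
      using Cg_doubled_residues_not_adj by blast
  qed
  ultimately show ?thesis
    by (simp add: card_image)
qed

lemma card_strip_set_pullback:
  assumes "1 \<le> k" "k \<le> j"
  shows "card (SIGMA x:{0..<2 * j + 1}. {y. (cycle_fold (j - k) x, y) \<in> strip_set k}) = j * k + k div 2"
proof -
  define d where "d = j - k"
  have j: "2 * j + 1 = 2 * d + (2 * k + 1)"
    using assms(2) unfolding d_def by simp
  have fiber_fin: "finite {y. (p, y) \<in> strip_set k}" for p
    by (rule finite_subset[of _ "{..<2 * k + 1}"]) (auto simp: strip_set_def)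
  have "card (SIGMA x:{0..<2 * j + 1}. {y. (cycle_fold d x, y) \<in> strip_set k})
      = (\<Sum>x\<in>{0..<2 * j + 1}. card {y. (cycle_fold d x, y) \<in> strip_set k})"
    using fiber_fin by (intro card_SigmaI) simp_all
  also have "\<dots> = (\<Sum>x<2 * d + (2 * k + 1). card (strip k (cycle_fold d x)))"
  proof (rule sum.cong)
    show "{0..<2 * j + 1} = {..<2 * d + (2 * k + 1)}"
      unfolding j by auto
    show "card {y. (cycle_fold d x, y) \<in> strip_set k} = card (strip k (cycle_fold d x))"
      if "x \<in> {..<2 * d + (2 * k + 1)}" for x
      using that assms(1) by (intro card_strip_set_fiber cycle_fold_less) auto
  qed
  also have "\<dots> = d * (card (strip k 0) + card (strip k 1)) + (\<Sum>p<2 * k + 1. card (strip k p))"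
    by (rule sum_cycle_fold)
  also have "\<dots> = d * k + (2 * k + 1) * k div 2"
  proof -
    have "card (strip k 0) + card (strip k 1) = k"
      using sum_card_strip[where n = 2 and k = k] by (simp add: lessThan_nat_numeral)
    then show ?thesis
      by (simp only: sum_card_strip)
  qed
  also have "\<dots> = j * k + k div 2"
  proof -
    have "(2 * k + 1) * k div 2 = k * k + k div 2"
      by (simp add: algebra_simps)
    moreover have "d * k = j * k - k * k" "k * k \<le> j * k"
      using assms(2) unfolding d_def by (simp_all add: diff_mult_distrib)
    ultimately show ?thesis
      by simp
  qed
  finally show ?thesis
    unfolding d_def .
qed

lemma independence_number_strong_prod_odd_cycles:
  assumes "1 \<le> k" "k \<le> j"
  shows "independence_number (strong_prod (Cg (2 * j + 1)) (Cg (2 * k + 1))) = j * k + k div 2"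
proof (rule independence_number_eqI)
  show "card J \<le> j * k + k div 2"
    if "independent (strong_prod (Cg (2 * j + 1)) (Cg (2 * k + 1))) J" for J
  proof -
    have "2 * card J \<le> (2 * j + 1) * k"
      using card_independent_strong_prod_Cg_le[OF _ _ that] independence_number_Cg[of "2 * k + 1"] assms
      by simp
    then show ?thesis
      using div_mult_mod_eq[of k 2] mod_less_divisor[of 2 k] by (simp add: algebra_simps)
  qed
  have j: "2 * j + 1 = 2 * (j - k) + (2 * k + 1)"
    using assms(2) by simp
  have "adj (Cg (2 * k + 1)) (cycle_fold (j - k) x) (cycle_fold (j - k) x')"
    if "adj (Cg (2 * j + 1)) x x'" for x x'
    using that[unfolded j] by (rule adj_Cg_cycle_fold[rotated]) (use assms(1) in simp)
  then show "independent (strong_prod (Cg (2 * j + 1)) (Cg (2 * k + 1)))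
      (SIGMA x:verts (Cg (2 * j + 1)). {y. (cycle_fold (j - k) x, y) \<in> strip_set k})"
    by (intro independent_strong_prod_pullback[OF _ independent_strip_set])
  show "card (SIGMA x:verts (Cg (2 * j + 1)). {y. (cycle_fold (j - k) x, y) \<in> strip_set k}) =
      j * k + k div 2"
    using card_strip_set_pullback[OF assms] by simp
qed simp

theorem mainTheorem15:
  fixes j k m n :: nat
  shows
   "(2 \<le> m \<and> 2 \<le> n \<longrightarrow>
       Ccc (strong_prod (Kg m) (Kg n)) = 1 \<and> Ccc (lexic_prod (Kg m) (Kg n)) = 1) \<and>
    (2 \<le> m \<and> 3 \<le> n \<longrightarrow>
       Ccc (strong_prod (Kg m) (Cg n)) = n div 2 \<and> Ccc (lexic_prod (Kg m) (Cg n)) = n div 2) \<and>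
    (2 \<le> m \<and> 2 \<le> n \<longrightarrow>
       Ccc (strong_prod (Kg m) (Pg n)) = (n + 1) div 2 \<and>
       Ccc (lexic_prod (Kg m) (Pg n)) = (n + 1) div 2) \<and>
    (3 \<le> m \<and> 3 \<le> n \<longrightarrow>
       Ccc (lexic_prod (Cg m) (Cg n)) = (m div 2) * (n div 2)) \<and>
    (3 \<le> 2 * j \<and> 3 \<le> n \<longrightarrow>
       Ccc (strong_prod (Cg (2 * j)) (Cg n)) = j * (n div 2)) \<and>
    (1 \<le> k \<and> k \<le> j \<longrightarrow>
       Ccc (strong_prod (Cg (2 * j + 1)) (Cg (2 * k + 1))) = j * k + k div 2) \<and>
    (3 \<le> m \<and> 2 \<le> n \<longrightarrow>
       Ccc (strong_prod (Cg m) (Pg n)) = (m div 2) * ((n + 1) div 2) \<and>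
       Ccc (lexic_prod (Cg m) (Pg n)) = (m div 2) * ((n + 1) div 2)) \<and>
    (2 \<le> m \<and> 2 \<le> n \<longrightarrow>
       Ccc (strong_prod (Pg m) (Pg n)) = ((m + 1) div 2) * ((n + 1) div 2) \<and>
       Ccc (lexic_prod (Pg m) (Pg n)) = ((m + 1) div 2) * ((n + 1) div 2))"
proof -
  note basic_graphs = nontrivial_connected_Kg nontrivial_connected_Cg nontrivial_connected_Pg
    has_clique_cover_Kg has_clique_cover_Cg_even has_clique_cover_Pg
  note independence_numbers = independence_number_Kg independence_number_Cg independence_number_Pg
  have "Ccc (strong_prod (Cg (2 * j + 1)) (Cg (2 * k + 1))) = j * k + k div 2"
    if "1 \<le> k" "k \<le> j"
    using independence_number_strong_prod_odd_cycles[OF that] that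
      Ccc_strong_prod_eq_independence_number[OF nontrivial_connected_Cg nontrivial_connected_Cg]
    by simp
  moreover have "Ccc (strong_prod (Cg m) (Pg n)) = independence_number (Pg n) * independence_number (Cg m)"
    if "3 \<le> m" "2 \<le> n"
    using that by (simp add: basic_graphs Ccc_strong_prod_eq_independence_number
        independence_number_strong_prod_commute[of "Cg m"] independence_number_strong_prod)
  \<comment> \<open>the independence numbers are evaluated only afterwards, since otherwise simp rewrites
    them inside the clique-cover premises and these no longer match\<close>
  ultimately show ?thesis
    by (simp add: basic_graphs Ccc_lexic_prod Ccc_strong_prod_clique_cover)
      (simp add: independence_numbers mult.commute)
qed

end
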